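(* Let $H$ be a Hopf algebra with bijective antipode and $(H_i)_{0\le i\le n}$ a decreasing Hopf algebra filtration of $H$ with $H_n=\{0\}$ (and $H_i=0$ for $i\ge n$). Let $V$ be a Yetter--Drinfeld module over $H$ with coaction $\delta$, and put $\mathcal F^iV=H_iV$ for all $i\ge0$. Then $\delta(\mathcal F^iV)\subseteq\sum_{k\ge0}H_k\otimes\mathcal F^{i-k}V$ for all $i\ge0$, and $(\mathcal F^iV)_{i\ge0}$ is a decreasing filtration of the braided vector space $V$.
   Context: A decreasing Hopf algebra filtration of $H$ is a family of subspaces $(H_i)_{i\ge0}$ with $H_0=H$, $H_i\supseteq H_j$ for $i\le j$, $H_iH_j\subseteq H_{i+j}$, $\Delta(H_i)\subseteq\sum_{j=0}^iH_j\otimes H_{i-j}$, and $\varepsilon(H_i)=0$, $S(H_i)\subseteq H_i$ for $i\ge1$. The braiding of $V$ is $c(v\otimes w)=v_{(-1)}w\otimes v_{(0)}$. A decreasing filtration of a braided vector space $(V,c)$ is a family $(\mathcal F^iV)_{i\ge0}$ with $V=\mathcal F^0V\supseteq\mathcal F^kV\supseteq\mathcal F^lV$ for $k\le l$, $\bigcap_i\mathcal F^iV=0$, and $c(\mathcal F^iV\otimes\mathcal F^jV)\subseteq\sum_{k+l\ge i+j}\mathcal F^kV\otimes\mathcal F^lV$. Here $\mathcal F^{j}V=V$ for $j<0$. *)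

theory Defs
  imports Complex_Main "HOL-Library.Poly_Mapping"
begin

text \<open>An element of A \<otimes> B is represented by an element of the free vector space
  over A \<times> B (finitely supported functions), and two representatives are identified
  modulo the subspace spanned by the bilinearity relations.\<close>

definition fsc :: "'k::field \<Rightarrow> ('a \<Rightarrow>\<^sub>0 'k) \<Rightarrow> ('a \<Rightarrow>\<^sub>0 'k)" where
  "fsc c x = Poly_Mapping.map (\<lambda>y. c * y) x"

definition fspan :: "('a \<Rightarrow>\<^sub>0 'k::field) set \<Rightarrow> ('a \<Rightarrow>\<^sub>0 'k) set" where
  "fspan G = module.span fsc G"

definition ft :: "'a \<Rightarrow> 'b \<Rightarrow> ('a \<times> 'b \<Rightarrow>\<^sub>0 'k::field)" where
  "ft a b = Poly_Mapping.single (a, b) 1"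

definition ft3 :: "'a \<Rightarrow> 'b \<Rightarrow> 'c \<Rightarrow> ('a \<times> 'b \<times> 'c \<Rightarrow>\<^sub>0 'k::field)" where
  "ft3 a b c = Poly_Mapping.single (a, b, c) 1"

definition flift :: "('a \<Rightarrow> 'c::ab_group_add) \<Rightarrow> ('k::field \<Rightarrow> 'c \<Rightarrow> 'c) \<Rightarrow> ('a \<Rightarrow>\<^sub>0 'k) \<Rightarrow> 'c" where
  "flift f s x = (\<Sum>p\<in>Poly_Mapping.keys x. s (Poly_Mapping.lookup x p) (f p))"

definition tens_rel2 ::
  "('k::field \<Rightarrow> 'a::ab_group_add \<Rightarrow> 'a) \<Rightarrow> ('k \<Rightarrow> 'b::ab_group_add \<Rightarrow> 'b) \<Rightarrow> ('a \<times> 'b \<Rightarrow>\<^sub>0 'k) set" where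
  "tens_rel2 sA sB = fspan
     ({ft (a + a') b - ft a b - ft a' b | a a' b. True}
    \<union> {ft a (b + b') - ft a b - ft a b' | a b b'. True}
    \<union> {ft (sA c a) b - fsc c (ft a b) | c a b. True}
    \<union> {ft a (sB c b) - fsc c (ft a b) | c a b. True})"

definition tens_rel3 ::
  "('k::field \<Rightarrow> 'a::ab_group_add \<Rightarrow> 'a) \<Rightarrow> ('k \<Rightarrow> 'b::ab_group_add \<Rightarrow> 'b)
    \<Rightarrow> ('k \<Rightarrow> 'c::ab_group_add \<Rightarrow> 'c) \<Rightarrow> ('a \<times> 'b \<times> 'c \<Rightarrow>\<^sub>0 'k) set" where
  "tens_rel3 sA sB sC = fspan
     ({ft3 (a + a') b c - ft3 a b c - ft3 a' b c | a a' b c. True}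
    \<union> {ft3 a (b + b') c - ft3 a b c - ft3 a b' c | a b b' c. True}
    \<union> {ft3 a b (c + c') - ft3 a b c - ft3 a b c' | a b c c'. True}
    \<union> {ft3 (sA r a) b c - fsc r (ft3 a b c) | r a b c. True}
    \<union> {ft3 a (sB r b) c - fsc r (ft3 a b c) | r a b c. True}
    \<union> {ft3 a b (sC r c) - fsc r (ft3 a b c) | r a b c. True})"

definition teq2 where
  "teq2 sA sB x y \<longleftrightarrow> x - y \<in> tens_rel2 sA sB"

definition teq3 where
  "teq3 sA sB sC x y \<longleftrightarrow> x - y \<in> tens_rel3 sA sB sC"

text \<open>The class of x in A \<otimes> B lies in the subspace spanned by the pure tensors in G.\<close>
definition tmem2 where
  "tmem2 sA sB x G \<longleftrightarrow> (\<exists>w\<in>fspan G. x - w \<in> tens_rel2 sA sB)"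

definition hopf_algebra ::
  "('k::field \<Rightarrow> 'h::ab_group_add \<Rightarrow> 'h) \<Rightarrow> ('h \<Rightarrow> 'h \<Rightarrow> 'h) \<Rightarrow> 'h
    \<Rightarrow> ('h \<Rightarrow> ('h \<times> 'h \<Rightarrow>\<^sub>0 'k)) \<Rightarrow> ('h \<Rightarrow> 'k) \<Rightarrow> ('h \<Rightarrow> 'h) \<Rightarrow> bool" where
  "hopf_algebra sH mult one Delta eps S \<longleftrightarrow>
     vector_space sH
   \<comment> \<open>associative unital algebra\<close>
   \<and> (\<forall>a b c. mult (a + b) c = mult a c + mult b c)
   \<and> (\<forall>a b c. mult a (b + c) = mult a b + mult a c)
   \<and> (\<forall>r a b. mult (sH r a) b = sH r (mult a b))
   \<and> (\<forall>r a b. mult a (sH r b) = sH r (mult a b))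
   \<and> (\<forall>a b c. mult (mult a b) c = mult a (mult b c))
   \<and> (\<forall>a. mult one a = a \<and> mult a one = a)
   \<comment> \<open>coassociative counital coalgebra\<close>
   \<and> (\<forall>a b. teq2 sH sH (Delta (a + b)) (Delta a + Delta b))
   \<and> (\<forall>r a. teq2 sH sH (Delta (sH r a)) (fsc r (Delta a)))
   \<and> (\<forall>h. teq3 sH sH sH
          (flift (\<lambda>(a, b). flift (\<lambda>(a1, a2). ft3 a1 a2 b) fsc (Delta a)) fsc (Delta h))
          (flift (\<lambda>(a, b). flift (\<lambda>(b1, b2). ft3 a b1 b2) fsc (Delta b)) fsc (Delta h)))
   \<and> (\<forall>a b. eps (a + b) = eps a + eps b)
   \<and> (\<forall>r a. eps (sH r a) = r * eps a)
   \<and> (\<forall>h. flift (\<lambda>(a, b). sH (eps a) b) sH (Delta h) = h)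
   \<and> (\<forall>h. flift (\<lambda>(a, b). sH (eps b) a) sH (Delta h) = h)
   \<comment> \<open>bialgebra compatibility\<close>
   \<and> (\<forall>a b. teq2 sH sH (Delta (mult a b))
          (flift (\<lambda>(a1, a2). flift (\<lambda>(b1, b2). ft (mult a1 b1) (mult a2 b2)) fsc (Delta b))
             fsc (Delta a)))
   \<and> teq2 sH sH (Delta one) (ft one one)
   \<and> (\<forall>a b. eps (mult a b) = eps a * eps b)
   \<and> eps one = 1
   \<comment> \<open>antipode\<close>
   \<and> (\<forall>a b. S (a + b) = S a + S b)
   \<and> (\<forall>r a. S (sH r a) = sH r (S a))
   \<and> (\<forall>h. flift (\<lambda>(a, b). mult (S a) b) sH (Delta h) = sH (eps h) one)
   \<and> (\<forall>h. flift (\<lambda>(a, b). mult a (S b)) sH (Delta h) = sH (eps h) one)"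

definition hopf_filtration ::
  "('k::field \<Rightarrow> 'h::ab_group_add \<Rightarrow> 'h) \<Rightarrow> ('h \<Rightarrow> 'h \<Rightarrow> 'h)
    \<Rightarrow> ('h \<Rightarrow> ('h \<times> 'h \<Rightarrow>\<^sub>0 'k)) \<Rightarrow> ('h \<Rightarrow> 'k) \<Rightarrow> ('h \<Rightarrow> 'h) \<Rightarrow> (nat \<Rightarrow> 'h set) \<Rightarrow> bool" where
  "hopf_filtration sH mult Delta eps S Hf \<longleftrightarrow>
     (\<forall>i. module.subspace sH (Hf i))
   \<and> Hf 0 = UNIV
   \<and> (\<forall>i j. i \<le> j \<longrightarrow> Hf j \<subseteq> Hf i)
   \<and> (\<forall>i j a b. a \<in> Hf i \<longrightarrow> b \<in> Hf j \<longrightarrow> mult a b \<in> Hf (i + j))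
   \<and> (\<forall>i h. h \<in> Hf i \<longrightarrow>
        tmem2 sH sH (Delta h) {ft a b | a b j. j \<le> i \<and> a \<in> Hf j \<and> b \<in> Hf (i - j)})
   \<and> (\<forall>i h. 1 \<le> i \<longrightarrow> h \<in> Hf i \<longrightarrow> eps h = 0 \<and> S h \<in> Hf i)"

text \<open>Left-left Yetter--Drinfeld module; the compatibility is
  delta(h v) = h(1) v(-1) S(h(3)) \<otimes> h(2) v(0).\<close>
definition yd_module ::
  "('k::field \<Rightarrow> 'h::ab_group_add \<Rightarrow> 'h) \<Rightarrow> ('h \<Rightarrow> 'h \<Rightarrow> 'h) \<Rightarrow> 'h
    \<Rightarrow> ('h \<Rightarrow> ('h \<times> 'h \<Rightarrow>\<^sub>0 'k)) \<Rightarrow> ('h \<Rightarrow> 'k) \<Rightarrow> ('h \<Rightarrow> 'h)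
    \<Rightarrow> ('k \<Rightarrow> 'v::ab_group_add \<Rightarrow> 'v) \<Rightarrow> ('h \<Rightarrow> 'v \<Rightarrow> 'v) \<Rightarrow> ('v \<Rightarrow> ('h \<times> 'v \<Rightarrow>\<^sub>0 'k)) \<Rightarrow> bool" where
  "yd_module sH mult one Delta eps S sV act delta \<longleftrightarrow>
     vector_space sV
   \<comment> \<open>left module\<close>
   \<and> (\<forall>a b v. act (a + b) v = act a v + act b v)
   \<and> (\<forall>a v w. act a (v + w) = act a v + act a w)
   \<and> (\<forall>r a v. act (sH r a) v = sV r (act a v))
   \<and> (\<forall>r a v. act a (sV r v) = sV r (act a v))
   \<and> (\<forall>v. act one v = v)
   \<and> (\<forall>a b v. act (mult a b) v = act a (act b v))
   \<comment> \<open>left comodule\<close>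
   \<and> (\<forall>v w. teq2 sH sV (delta (v + w)) (delta v + delta w))
   \<and> (\<forall>r v. teq2 sH sV (delta (sV r v)) (fsc r (delta v)))
   \<and> (\<forall>v. flift (\<lambda>(a, x). sV (eps a) x) sV (delta v) = v)
   \<and> (\<forall>v. teq3 sH sH sV
          (flift (\<lambda>(a, x). flift (\<lambda>(a1, a2). ft3 a1 a2 x) fsc (Delta a)) fsc (delta v))
          (flift (\<lambda>(a, x). flift (\<lambda>(b, y). ft3 a b y) fsc (delta x)) fsc (delta v)))
   \<comment> \<open>Yetter--Drinfeld compatibility\<close>
   \<and> (\<forall>h v. teq2 sH sV (delta (act h v))
          (flift (\<lambda>(h1, h23). flift (\<lambda>(h2, h3).
              flift (\<lambda>(a, x). ft (mult (mult h1 a) (S h3)) (act h2 x)) fsc (delta v))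
            fsc (Delta h23)) fsc (Delta h)))"

text \<open>The braiding c(v \<otimes> w) = v(-1) w \<otimes> v(0), extended linearly to representatives.\<close>
definition yd_braiding ::
  "('h \<Rightarrow> 'v \<Rightarrow> 'v) \<Rightarrow> ('v \<Rightarrow> ('h \<times> 'v \<Rightarrow>\<^sub>0 'k::field)) \<Rightarrow> ('v \<times> 'v \<Rightarrow>\<^sub>0 'k) \<Rightarrow> ('v \<times> 'v \<Rightarrow>\<^sub>0 'k)" where
  "yd_braiding act delta x =
     flift (\<lambda>(v, w). flift (\<lambda>(a, y). ft (act a w) y) fsc (delta v)) fsc x"

definition yd_filt ::
  "('k::field \<Rightarrow> 'v::ab_group_add \<Rightarrow> 'v) \<Rightarrow> ('h \<Rightarrow> 'v \<Rightarrow> 'v) \<Rightarrow> (nat \<Rightarrow> 'h set) \<Rightarrow> int \<Rightarrow> 'v set" where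
  "yd_filt sV act Hf i =
     (if i < 0 then UNIV else module.span sV {act h v | h v. h \<in> Hf (nat i)})"

definition braided_vs_filtration ::
  "('k::field \<Rightarrow> 'v::ab_group_add \<Rightarrow> 'v) \<Rightarrow> (('v \<times> 'v \<Rightarrow>\<^sub>0 'k) \<Rightarrow> ('v \<times> 'v \<Rightarrow>\<^sub>0 'k))
    \<Rightarrow> (nat \<Rightarrow> 'v set) \<Rightarrow> bool" where
  "braided_vs_filtration sV c F \<longleftrightarrow>
     (\<forall>i. module.subspace sV (F i))
   \<and> F 0 = UNIV
   \<and> (\<forall>k l. k \<le> l \<longrightarrow> F l \<subseteq> F k)
   \<and> (\<Inter>i. F i) = {0}
   \<and> (\<forall>i j. \<forall>x \<in> fspan {ft v w | v w. v \<in> F i \<and> w \<in> F j}.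
        tmem2 sV sV (c x) {ft v w | v w k l. i + j \<le> k + l \<and> v \<in> F k \<and> w \<in> F l})"

end

theory Submission
  imports Defs
begin

text \<open>\<open>F\<^sup>iV\<close> is spanned by the \<open>h v\<close> with \<open>h \<in> H\<^sub>i\<close>, and by the Yetter--Drinfeld condition
  \<open>\<delta>(h v) = h(1) v(-1) S(h(3)) \<otimes> h(2) v(0)\<close>. Splitting \<open>\<Delta>\<close> twice along the filtration gives
  \<open>h(1) \<in> H\<^sub>j\<close>, \<open>h(2) \<in> H\<^sub>m\<close>, \<open>h(3) \<in> H\<^sub>i\<^sub>-\<^sub>j\<^sub>-\<^sub>m\<close>; as \<open>S\<close> preserves the filtration
  and multiplication adds degrees, every term lies in \<open>H\<^sub>i\<^sub>-\<^sub>m \<otimes> F\<^sup>mV\<close>.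
  For the braiding, \<open>v \<in> F\<^sup>iV\<close> and \<open>w \<in> F\<^sup>jV\<close> give terms \<open>v(-1) \<in> H\<^sub>k\<close>, \<open>v(0) \<in> F\<^sup>i\<^sup>-\<^sup>kV\<close>,
  hence \<open>v(-1) w \<otimes> v(0) \<in> F\<^sup>k\<^sup>+\<^sup>jV \<otimes> F\<^sup>i\<^sup>-\<^sup>kV\<close>. Finally \<open>F\<^sup>nV = H\<^sub>nV = 0\<close> makes the
  filtration separated.\<close>

lemma lookup_fsc [simp]: "Poly_Mapping.lookup (fsc c x) p = c * Poly_Mapping.lookup x p"
  unfolding fsc_def by (simp add: Poly_Mapping.map.rep_eq when_def)

interpretation fv: vector_space "fsc :: 'k::field \<Rightarrow> ('a \<Rightarrow>\<^sub>0 'k) \<Rightarrow> ('a \<Rightarrow>\<^sub>0 'k)"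
  by unfold_locales (auto intro!: poly_mapping_eqI simp: lookup_add algebra_simps)

lemma fspan_eq: "fspan = fv.span"
  by (simp add: fspan_def fun_eq_iff)

lemma flift_eq_sum_superset:
  assumes "finite K" "Poly_Mapping.keys x \<subseteq> K"
  shows "flift f fsc x = (\<Sum>p\<in>K. fsc (Poly_Mapping.lookup x p) (f p))"
  unfolding flift_def
  by (rule sum.mono_neutral_left) (use assms in \<open>auto simp: in_keys_iff\<close>)

lemma flift_add: "flift f fsc (x + y) = flift f fsc x + flift f fsc y"
proof -
  let ?K = "Poly_Mapping.keys x \<union> Poly_Mapping.keys y"
  have "flift f fsc (x + y) = (\<Sum>p\<in>?K. fsc (Poly_Mapping.lookup (x + y) p) (f p))"
    by (rule flift_eq_sum_superset) (auto dest: keys_add[THEN subsetD])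
  also have "\<dots> = (\<Sum>p\<in>?K. fsc (Poly_Mapping.lookup x p) (f p))
                  + (\<Sum>p\<in>?K. fsc (Poly_Mapping.lookup y p) (f p))"
    by (simp add: lookup_add fv.scale_left_distrib sum.distrib)
  also have "\<dots> = flift f fsc x + flift f fsc y"
    by (subst (1 2) flift_eq_sum_superset[symmetric]) auto
  finally show ?thesis .
qed

lemma flift_fsc: "flift f fsc (fsc c x) = fsc c (flift f fsc x)"
proof -
  have "flift f fsc (fsc c x)
      = (\<Sum>p\<in>Poly_Mapping.keys x. fsc (Poly_Mapping.lookup (fsc c x) p) (f p))"
    by (rule flift_eq_sum_superset) (auto simp: in_keys_iff)
  then show ?thesis
    by (simp add: flift_def fv.scale_sum_right)
qed

lemma flift_diff: "flift f fsc (x - y) = flift f fsc x - flift f fsc y"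
  by (metis add_diff_cancel_right' diff_add_cancel flift_add)

lemma flift_ft [simp]: "flift f fsc (ft a b) = f (a, b)"
  by (simp add: flift_def ft_def)

lemma flift_fun_diff: "flift (\<lambda>p. f p - g p) fsc x = flift f fsc x - flift g fsc x"
  by (simp add: flift_def sum_subtractf fv.scale_right_diff_distrib)

lemma flift_fun_fsc: "flift (\<lambda>p. fsc r (f p)) fsc x = fsc r (flift f fsc x)"
  by (simp add: flift_def fv.scale_sum_right mult.commute)

lemma flift_in_subspace:
  assumes "fv.subspace T" "\<And>p. f p \<in> T"
  shows "flift f fsc x \<in> T"
  unfolding flift_def using assms
  by (intro fv.subspace_sum) (auto intro: fv.subspace_scale)

lemma linear_image_span_subspace:
  assumes add: "\<And>x y. L (x + y) = L x + L y" and scale: "\<And>c x. L (fsc c x) = fsc c (L x)"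
    and T: "fv.subspace T" and G: "\<And>g. g \<in> G \<Longrightarrow> L g \<in> T" and x: "x \<in> fv.span G"
  shows "L x \<in> T"
  using x
proof (induction rule: fv.span_induct_alt)
  case base
  have "L 0 = 0"
    using add[of 0 0] by simp
  then show ?case
    using T by (simp add: fv.subspace_0)
next
  case (step c x y)
  then show ?case
    using add scale T G by (simp add: fv.subspace_add fv.subspace_scale)
qed

text \<open>A tensor is only a representative in a free vector space, so the maps of interest
  (coproduct, coaction, maps induced on tensors) are additive and homogeneous only up to
  elements of a relation subspace \<open>R\<close>.\<close>

definition linear_mod ::
  "('k::field \<Rightarrow> 'a::ab_group_add \<Rightarrow> 'a) \<Rightarrow> ('b \<Rightarrow>\<^sub>0 'k) set \<Rightarrow> ('a \<Rightarrow> ('b \<Rightarrow>\<^sub>0 'k)) \<Rightarrow> bool"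
  where "linear_mod s R f \<longleftrightarrow>
     (\<forall>x y. f (x + y) - f x - f y \<in> R) \<and> (\<forall>c x. f (s c x) - fsc c (f x) \<in> R)"

definition bilinear_mod ::
  "('k::field \<Rightarrow> 'a::ab_group_add \<Rightarrow> 'a) \<Rightarrow> ('k \<Rightarrow> 'b::ab_group_add \<Rightarrow> 'b)
    \<Rightarrow> ('c \<Rightarrow>\<^sub>0 'k) set \<Rightarrow> ('a \<times> 'b \<Rightarrow> ('c \<Rightarrow>\<^sub>0 'k)) \<Rightarrow> bool"
  where "bilinear_mod sA sB R f \<longleftrightarrow>
     (\<forall>b. linear_mod sA R (\<lambda>a. f (a, b))) \<and> (\<forall>a. linear_mod sB R (\<lambda>b. f (a, b)))"

lemma tens_rel2_subspace: "fv.subspace (tens_rel2 sA sB)"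
  by (simp add: tens_rel2_def fspan_eq)

lemma linear_mod_ft_left:
  assumes "\<And>x y. A (x + y) = A x + A y" "\<And>c x. A (sA c x) = sC c (A x)"
  shows "linear_mod sA (tens_rel2 sC sD) (\<lambda>a. ft (A a) b)"
  unfolding linear_mod_def tens_rel2_def fspan_eq assms by (blast intro: fv.span_base)

lemma linear_mod_ft_right:
  assumes "\<And>x y. B (x + y) = B x + B y" "\<And>c x. B (sB c x) = sD c (B x)"
  shows "linear_mod sB (tens_rel2 sC sD) (\<lambda>b. ft a (B b))"
  unfolding linear_mod_def tens_rel2_def fspan_eq assms by (blast intro: fv.span_base)

lemma flift_tens_rel2:
  assumes R: "fv.subspace R" and f: "bilinear_mod sA sB R f" and x: "x \<in> tens_rel2 sA sB"
  shows "flift f fsc x \<in> R"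
  using flift_add flift_fsc R _ x[unfolded tens_rel2_def fspan_eq]
proof (rule linear_image_span_subspace)
  fix g assume "g \<in> {ft (a + a') b - ft a b - ft a' b | a a' b. True}
    \<union> {ft a (b + b') - ft a b - ft a b' | a b b'. True}
    \<union> {ft (sA c a) b - fsc c (ft a b) | c a b. True}
    \<union> {ft a (sB c b) - fsc c (ft a b) | c a b. True}"
  then show "flift f fsc g \<in> R"
    using f unfolding bilinear_mod_def linear_mod_def by (auto simp: flift_diff flift_fsc)
qed

lemma linear_mod_flift:
  assumes R: "fv.subspace R" and f: "\<And>p. linear_mod s R (\<lambda>a. f a p)"
  shows "linear_mod s R (\<lambda>a. flift (f a) fsc x)"
proof -
  have "flift (f (a + a')) fsc x - flift (f a) fsc x - flift (f a') fsc x
      = flift (\<lambda>p. f (a + a') p - f a p - f a' p) fsc x" for a a'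
    by (simp add: flift_fun_diff)
  moreover have "flift (f (s c a)) fsc x - fsc c (flift (f a) fsc x)
      = flift (\<lambda>p. f (s c a) p - fsc c (f a p)) fsc x" for c a
    by (simp add: flift_fun_diff flift_fun_fsc)
  ultimately show ?thesis
    using f unfolding linear_mod_def by (simp add: flift_in_subspace[OF R])
qed

lemma linear_mod_flift_comp:
  assumes R: "fv.subspace R" and f: "bilinear_mod sA sB R f"
    and D: "linear_mod s (tens_rel2 sA sB) D"
  shows "linear_mod s R (\<lambda>b. flift f fsc (D b))"
proof -
  have "flift f fsc (D (x + y)) - flift f fsc (D x) - flift f fsc (D y)
      = flift f fsc (D (x + y) - D x - D y)" for x y
    by (simp add: flift_diff)
  moreover have "flift f fsc (D (s c x)) - fsc c (flift f fsc (D x))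
      = flift f fsc (D (s c x) - fsc c (D x))" for c x
    by (simp add: flift_diff flift_fsc)
  ultimately show ?thesis
    using D flift_tens_rel2[OF R f] unfolding linear_mod_def by simp
qed

lemma tmem2_iff_span: "tmem2 sA sB x G \<longleftrightarrow> x \<in> fv.span (G \<union> tens_rel2 sA sB)"
proof -
  have sum: "tmem2 sA sB x G \<longleftrightarrow> (\<exists>w y. x = w + y \<and> w \<in> fv.span G \<and> y \<in> tens_rel2 sA sB)"
  proof
    assume "tmem2 sA sB x G"
    then obtain w where "w \<in> fv.span G" "x - w \<in> tens_rel2 sA sB"
      unfolding tmem2_def fspan_eq by blast
    then show "\<exists>w y. x = w + y \<and> w \<in> fv.span G \<and> y \<in> tens_rel2 sA sB"
      by (intro exI[of _ w] exI[of _ "x - w"]) simp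
  next
    assume "\<exists>w y. x = w + y \<and> w \<in> fv.span G \<and> y \<in> tens_rel2 sA sB"
    then obtain w y where "x = w + y" "w \<in> fv.span G" "y \<in> tens_rel2 sA sB"
      by blast
    then show "tmem2 sA sB x G"
      unfolding tmem2_def fspan_eq by (intro bexI[of _ w]) simp_all
  qed
  have rel: "fv.span (tens_rel2 sA sB) = tens_rel2 sA sB"
    by (simp add: tens_rel2_subspace)
  show ?thesis
    unfolding sum fv.span_Un rel by blast
qed

lemma tmem2_subspace: "fv.subspace {x. tmem2 sA sB x G}"
  by (simp add: tmem2_iff_span)

lemma tmem2_of_tens_rel2: "x \<in> tens_rel2 sA sB \<Longrightarrow> tmem2 sA sB x G"
  by (simp add: tmem2_iff_span fv.span_base)

lemma tmem2_of_fspan: "x \<in> fspan G \<Longrightarrow> tmem2 sA sB x G"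
  unfolding tmem2_iff_span fspan_eq by (rule subsetD[OF fv.span_mono]) auto

lemma tmem2_teq2:
  assumes "teq2 sA sB x y" and "tmem2 sA sB y G"
  shows "tmem2 sA sB x G"
proof -
  have "x - y \<in> fv.span (G \<union> tens_rel2 sA sB)"
    using assms(1) unfolding teq2_def by (intro fv.span_base) simp
  then have "(x - y) + y \<in> fv.span (G \<union> tens_rel2 sA sB)"
    using assms(2) unfolding tmem2_iff_span by (rule fv.span_add)
  then show ?thesis
    by (simp add: tmem2_iff_span)
qed

lemma tmem2_flift:
  assumes f: "bilinear_mod sA sB (tens_rel2 sC sD) f"
    and x: "tmem2 sA sB x G"
    and G: "\<And>g. g \<in> G \<Longrightarrow> tmem2 sC sD (flift f fsc g) G'"
  shows "tmem2 sC sD (flift f fsc x) G'"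
proof -
  obtain w where w: "w \<in> fv.span G" "x - w \<in> tens_rel2 sA sB"
    using x unfolding tmem2_def fspan_eq by blast
  have "flift f fsc w \<in> {y. tmem2 sC sD y G'}"
    by (rule linear_image_span_subspace[OF flift_add flift_fsc tmem2_subspace _ w(1)]) (simp add: G)
  moreover have "tmem2 sC sD (flift f fsc (x - w)) G'"
    by (rule tmem2_of_tens_rel2, rule flift_tens_rel2[OF tens_rel2_subspace f w(2)])
  ultimately show ?thesis
    using fv.subspace_add[OF tmem2_subspace] by (fastforce simp: flift_diff)
qed

lemma tmem2_span_image:
  assumes "vector_space s" and L: "linear_mod s (tens_rel2 sA sB) L"
    and G: "\<And>g. g \<in> G \<Longrightarrow> tmem2 sA sB (L g) G'" and x: "x \<in> module.span s G"
  shows "tmem2 sA sB (L x) G'"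
proof -
  interpret vector_space s by fact
  from x show ?thesis
  proof (induction rule: span_induct_alt)
    case base
    have "L (0 + 0) - L 0 - L 0 \<in> tens_rel2 sA sB"
      using L unfolding linear_mod_def by blast
    then have "- L 0 \<in> tens_rel2 sA sB"
      by simp
    then have "L 0 \<in> tens_rel2 sA sB"
      using fv.subspace_neg[OF tens_rel2_subspace] by fastforce
    then show ?case
      by (rule tmem2_of_tens_rel2)
  next
    case (step c x y)
    have T: "fv.subspace {z. tmem2 sA sB z G'}"
      by (rule tmem2_subspace)
    have "fsc c (L x) \<in> {z. tmem2 sA sB z G'}"
      using G[OF step.hyps] by (intro fv.subspace_scale[OF T]) simp
    then have "fsc c (L x) + L y \<in> {z. tmem2 sA sB z G'}"
      using step.IH by (intro fv.subspace_add[OF T]) simp_all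
    then have "tmem2 sA sB (fsc c (L x) + L y) G'"
      by simp
    moreover have "teq2 sA sB (L (s c x + y)) (fsc c (L x) + L y)"
    proof -
      have "L (s c x + y) - L (s c x) - L y \<in> tens_rel2 sA sB"
        and "L (s c x) - fsc c (L x) \<in> tens_rel2 sA sB"
        using L unfolding linear_mod_def by blast+
      then have sum: "(L (s c x + y) - L (s c x) - L y) + (L (s c x) - fsc c (L x))
          \<in> tens_rel2 sA sB"
        by (rule fv.subspace_add[OF tens_rel2_subspace])
      have "L (s c x + y) - (fsc c (L x) + L y)
          = (L (s c x + y) - L (s c x) - L y) + (L (s c x) - fsc c (L x))"
        by (simp add: algebra_simps)
      then show ?thesis
        unfolding teq2_def using sum by (simp only:)
    qed
    ultimately show ?case
      by (rule tmem2_teq2[rotated])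
  qed
qed

locale filtered_yd_module =
  fixes sH :: "'k::field \<Rightarrow> 'h::ab_group_add \<Rightarrow> 'h"
    and mult :: "'h \<Rightarrow> 'h \<Rightarrow> 'h" and one :: 'h
    and Delta :: "'h \<Rightarrow> ('h \<times> 'h \<Rightarrow>\<^sub>0 'k)" and eps :: "'h \<Rightarrow> 'k" and S :: "'h \<Rightarrow> 'h"
    and Hf :: "nat \<Rightarrow> 'h set"
    and sV :: "'k \<Rightarrow> 'v::ab_group_add \<Rightarrow> 'v" and act :: "'h \<Rightarrow> 'v \<Rightarrow> 'v"
    and delta :: "'v \<Rightarrow> ('h \<times> 'v \<Rightarrow>\<^sub>0 'k)"
  assumes hopf: "hopf_algebra sH mult one Delta eps S"
    and filt: "hopf_filtration sH mult Delta eps S Hf"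
    and yd: "yd_module sH mult one Delta eps S sV act delta"
begin

sublocale V: vector_space sV
  using yd by (simp add: yd_module_def)

lemma mult_linear:
  "mult (a + b) c = mult a c + mult b c" "mult a (b + c) = mult a b + mult a c"
  "mult (sH r a) b = sH r (mult a b)" "mult a (sH r b) = sH r (mult a b)"
  using hopf by (simp_all add: hopf_algebra_def)

lemma antipode_linear: "S (a + b) = S a + S b" "S (sH r a) = sH r (S a)"
  using hopf by (simp_all add: hopf_algebra_def)

lemma Delta_linear_mod: "linear_mod sH (tens_rel2 sH sH) Delta"
  using hopf by (simp add: hopf_algebra_def linear_mod_def teq2_def diff_diff_eq)

lemma act_linear:
  "act (a + b) v = act a v + act b v" "act a (v + w) = act a v + act a w"
  "act (sH r a) v = sV r (act a v)" "act a (sV r v) = sV r (act a v)"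
  using yd by (simp_all add: yd_module_def)

lemma act_one: "act one v = v"
  using yd by (simp add: yd_module_def)

lemma act_mult: "act (mult a b) v = act a (act b v)"
  using yd by (simp add: yd_module_def)

lemma delta_linear_mod: "linear_mod sV (tens_rel2 sH sV) delta"
  using yd by (simp add: yd_module_def linear_mod_def teq2_def diff_diff_eq)

lemma Hf_0: "Hf 0 = UNIV"
  using filt by (simp add: hopf_filtration_def)

lemma Hf_antimono: "i \<le> j \<Longrightarrow> Hf j \<subseteq> Hf i"
  using filt by (simp add: hopf_filtration_def)

lemma Hf_mult: "a \<in> Hf i \<Longrightarrow> b \<in> Hf j \<Longrightarrow> mult a b \<in> Hf (i + j)"
  using filt by (simp add: hopf_filtration_def)

lemma Hf_antipode: "h \<in> Hf i \<Longrightarrow> S h \<in> Hf i"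
  using filt Hf_0 by (cases "i = 0") (auto simp: hopf_filtration_def)

lemma Delta_Hf:
  "h \<in> Hf i \<Longrightarrow> tmem2 sH sH (Delta h) {ft a b | a b j. j \<le> i \<and> a \<in> Hf j \<and> b \<in> Hf (i - j)}"
  using filt by (simp add: hopf_filtration_def)

text \<open>The right-hand side \<open>h(1) v(-1) S(h(3)) \<otimes> h(2) v(0)\<close> of the Yetter--Drinfeld
  condition, as a map of \<open>h(1) \<otimes> h(2)(3)\<close>; the inner map is that of \<open>h(2) \<otimes> h(3)\<close>.\<close>

definition yd_rhs_inner :: "'v \<Rightarrow> 'h \<Rightarrow> 'h \<times> 'h \<Rightarrow> ('h \<times> 'v \<Rightarrow>\<^sub>0 'k)" where
  "yd_rhs_inner v h1 = (\<lambda>(h2, h3).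
     flift (\<lambda>(a, x). ft (mult (mult h1 a) (S h3)) (act h2 x)) fsc (delta v))"

definition yd_rhs :: "'v \<Rightarrow> 'h \<times> 'h \<Rightarrow> ('h \<times> 'v \<Rightarrow>\<^sub>0 'k)" where
  "yd_rhs v = (\<lambda>(h1, h23). flift (yd_rhs_inner v h1) fsc (Delta h23))"

lemma delta_act: "teq2 sH sV (delta (act h v)) (flift (yd_rhs v) fsc (Delta h))"
  using yd unfolding yd_module_def yd_rhs_def yd_rhs_inner_def by blast

lemma bilinear_yd_rhs_inner: "bilinear_mod sH sH (tens_rel2 sH sV) (yd_rhs_inner v h1)"
  unfolding bilinear_mod_def yd_rhs_inner_def prod.case
  by (intro conjI allI linear_mod_flift tens_rel2_subspace)
    (auto split: prod.split intro!: linear_mod_ft_left linear_mod_ft_right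
      simp: act_linear mult_linear antipode_linear)

lemma bilinear_yd_rhs: "bilinear_mod sH sH (tens_rel2 sH sV) (yd_rhs v)"
  unfolding bilinear_mod_def yd_rhs_def prod.case
proof (intro conjI allI)
  show "linear_mod sH (tens_rel2 sH sV) (\<lambda>h1. flift (yd_rhs_inner v h1) fsc (Delta h23))" for h23
    unfolding yd_rhs_inner_def
    by (intro linear_mod_flift tens_rel2_subspace)
      (auto split: prod.split intro!: linear_mod_flift tens_rel2_subspace linear_mod_ft_left
        simp: mult_linear)
  show "linear_mod sH (tens_rel2 sH sV) (\<lambda>h23. flift (yd_rhs_inner v h1) fsc (Delta h23))" for h1
    by (rule linear_mod_flift_comp[OF tens_rel2_subspace bilinear_yd_rhs_inner Delta_linear_mod])
qed

abbreviation F :: "nat \<Rightarrow> 'v set" where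
  "F i \<equiv> yd_filt sV act Hf (int i)"

lemma F_eq_span: "F i = V.span {act h v | h v. h \<in> Hf i}"
  by (simp add: yd_filt_def)

lemma act_mem_F: "h \<in> Hf i \<Longrightarrow> act h v \<in> F i"
  unfolding F_eq_span by (intro V.span_base) blast

lemma F_0: "F 0 = UNIV"
  using act_mem_F[of one 0] Hf_0 act_one by auto

lemma yd_filt_diff_subset: "yd_filt sV act Hf (int i - int k) \<subseteq> F (i - k)"
proof (cases "k \<le> i")
  case True
  then show ?thesis
    by simp
next
  case False
  then show ?thesis
    using F_0 by simp
qed

lemma act_F:
  assumes a: "a \<in> Hf k" and w: "w \<in> F j"
  shows "act a w \<in> F (k + j)"
  using w unfolding F_eq_span
proof (induction rule: V.span_induct_alt)
  case base
  show ?case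
    using act_linear(2)[of a 0 0] by (simp add: V.span_zero)
next
  case (step c x y)
  then obtain h u where x: "x = act h u" "h \<in> Hf j"
    by blast
  have "act a x = act (mult a h) u" "mult a h \<in> Hf (k + j)"
    using x Hf_mult[OF a] by (simp_all add: act_mult)
  then have "act a x \<in> V.span {act h v | h v. h \<in> Hf (k + j)}"
    by (intro V.span_base) blast
  then show ?case
    using step.IH by (simp add: act_linear V.span_add V.span_scale)
qed

lemma F_subspace: "V.subspace (F i)"
  unfolding F_eq_span by (rule V.subspace_span)

lemma F_antimono: "k \<le> l \<Longrightarrow> F l \<subseteq> F k"
  unfolding F_eq_span using Hf_antimono by (intro V.span_mono) blast

lemma F_eq_0: "Hf n = {0} \<Longrightarrow> F n = {0}"
proof -
  assume "Hf n = {0}"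
  then have "{act h v | h v. h \<in> Hf n} \<subseteq> {0}"
    using act_linear(1)[of 0 0] by auto
  then have "F n \<subseteq> {0}"
    unfolding F_eq_span by (rule V.span_minimal) (simp add: V.subspace_def)
  then show "F n = {0}"
    using F_subspace V.subspace_0 by blast
qed

definition HF_tensors :: "nat \<Rightarrow> ('h \<times> 'v \<Rightarrow>\<^sub>0 'k) set" where
  "HF_tensors i = {ft a w | a w k. a \<in> Hf k \<and> w \<in> yd_filt sV act Hf (int i - int k)}"

lemma yd_rhs_inner_mem:
  assumes "j \<le> i" "a \<in> Hf j" "m \<le> i - j" "c \<in> Hf m" "d \<in> Hf (i - j - m)"
  shows "yd_rhs_inner v a (c, d) \<in> fspan (HF_tensors i)"
proof -
  have "ft (mult (mult a e) (S d)) (act c x) \<in> HF_tensors i" for e x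
  proof -
    have "mult a e \<in> Hf j"
      using Hf_mult[OF assms(2), of e 0] Hf_0 by simp
    then have "mult (mult a e) (S d) \<in> Hf (j + (i - j - m))"
      by (rule Hf_mult[OF _ Hf_antipode[OF assms(5)]])
    moreover have "j + (i - j - m) = i - m" "int i - int (i - m) = int m"
      using assms(1,3) by arith+
    ultimately show ?thesis
      unfolding HF_tensors_def using act_mem_F[OF assms(4)] by force
  qed
  then show ?thesis
    unfolding yd_rhs_inner_def fspan_eq prod.case
    by (intro flift_in_subspace[OF fv.subspace_span]) (auto split: prod.split intro: fv.span_base)
qed

lemma delta_act_mem:
  assumes h: "h \<in> Hf i"
  shows "tmem2 sH sV (delta (act h u)) (HF_tensors i)"
proof -
  have "tmem2 sH sV (flift (yd_rhs u) fsc (Delta h)) (HF_tensors i)"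
  proof (rule tmem2_flift[OF bilinear_yd_rhs Delta_Hf[OF h]])
    fix g :: "'h \<times> 'h \<Rightarrow>\<^sub>0 'k"
    assume "g \<in> {ft a b | a b j. j \<le> i \<and> a \<in> Hf j \<and> b \<in> Hf (i - j)}"
    then obtain a b j where g: "g = ft a b" "j \<le> i" "a \<in> Hf j" "b \<in> Hf (i - j)"
      by blast
    have "tmem2 sH sV (flift (yd_rhs_inner u a) fsc (Delta b)) (HF_tensors i)"
    proof (rule tmem2_flift[OF bilinear_yd_rhs_inner Delta_Hf[OF g(4)]])
      fix g' :: "'h \<times> 'h \<Rightarrow>\<^sub>0 'k"
      assume "g' \<in> {ft c d | c d m. m \<le> i - j \<and> c \<in> Hf m \<and> d \<in> Hf (i - j - m)}"
      then show "tmem2 sH sV (flift (yd_rhs_inner u a) fsc g') (HF_tensors i)"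
        using yd_rhs_inner_mem[OF g(2,3)] by (auto intro: tmem2_of_fspan)
    qed
    then show "tmem2 sH sV (flift (yd_rhs u) fsc g) (HF_tensors i)"
      by (simp add: g yd_rhs_def)
  qed
  then show ?thesis
    by (rule tmem2_teq2[OF delta_act])
qed

lemma delta_mem: "v \<in> F i \<Longrightarrow> tmem2 sH sV (delta v) (HF_tensors i)"
  unfolding F_eq_span
  by (rule tmem2_span_image[OF V.vector_space_axioms delta_linear_mod])
    (auto intro: delta_act_mem)

lemma braiding_ft_mem:
  assumes v: "v \<in> F i" and w: "w \<in> F j"
  shows "tmem2 sV sV (yd_braiding act delta (ft v w))
           {ft v w | v w k l. i + j \<le> k + l \<and> v \<in> F k \<and> w \<in> F l}"
proof -
  have "bilinear_mod sH sV (tens_rel2 sV sV) (\<lambda>(a, y). ft (act a w) y)"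
    unfolding bilinear_mod_def
    by (auto intro!: linear_mod_ft_left linear_mod_ft_right[where B = "\<lambda>y. y"] simp: act_linear)
  then have "tmem2 sV sV (flift (\<lambda>(a, y). ft (act a w) y) fsc (delta v))
           {ft v w | v w k l. i + j \<le> k + l \<and> v \<in> F k \<and> w \<in> F l}"
  proof (rule tmem2_flift[OF _ delta_mem[OF v]])
    fix g assume "g \<in> HF_tensors i"
    then obtain a y k where g: "g = ft a y" "a \<in> Hf k" "y \<in> F (i - k)"
      unfolding HF_tensors_def using yd_filt_diff_subset by blast
    have "ft (act a w) y \<in> {ft v w | v w k l. i + j \<le> k + l \<and> v \<in> F k \<and> w \<in> F l}"
    proof -
      have "i + j \<le> (k + j) + (i - k)"
        by simp
      then show ?thesis
        using act_F[OF g(2) w] g(3) by blast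
    qed
    then have "ft (act a w) y \<in> fspan {ft v w | v w k l. i + j \<le> k + l \<and> v \<in> F k \<and> w \<in> F l}"
      unfolding fspan_eq by (rule fv.span_base)
    then show "tmem2 sV sV (flift (\<lambda>(a, y). ft (act a w) y) fsc g)
           {ft v w | v w k l. i + j \<le> k + l \<and> v \<in> F k \<and> w \<in> F l}"
      unfolding g flift_ft prod.case by (rule tmem2_of_fspan)
  qed
  then show ?thesis
    by (simp add: yd_braiding_def)
qed

lemma braiding_mem:
  assumes "x \<in> fspan {ft v w | v w. v \<in> F i \<and> w \<in> F j}"
  shows "tmem2 sV sV (yd_braiding act delta x)
           {ft v w | v w k l. i + j \<le> k + l \<and> v \<in> F k \<and> w \<in> F l}"
proof -
  have "yd_braiding act delta x \<in>
      {y. tmem2 sV sV y {ft v w | v w k l. i + j \<le> k + l \<and> v \<in> F k \<and> w \<in> F l}}"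
    unfolding yd_braiding_def
    by (rule linear_image_span_subspace[OF flift_add flift_fsc tmem2_subspace _
          assms[unfolded fspan_eq]])
      (auto dest: braiding_ft_mem simp: yd_braiding_def)
  then show ?thesis
    by simp
qed

lemma braided_vs_filtration_F:
  assumes "Hf n = {0}"
  shows "braided_vs_filtration sV (yd_braiding act delta) F"
  unfolding braided_vs_filtration_def
proof (intro conjI allI impI ballI F_subspace F_0 F_antimono braiding_mem)
  show "(\<Inter>i. F i) = {0}"
    using F_eq_0[OF assms] F_subspace V.subspace_0 by blast
qed

end

theorem mainTheorem12:
  fixes sH :: "'k::field \<Rightarrow> 'h::ab_group_add \<Rightarrow> 'h"
    and mult :: "'h \<Rightarrow> 'h \<Rightarrow> 'h" and one :: 'h
    and Delta :: "'h \<Rightarrow> ('h \<times> 'h \<Rightarrow>\<^sub>0 'k)" and eps :: "'h \<Rightarrow> 'k" and S :: "'h \<Rightarrow> 'h"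
    and Hf :: "nat \<Rightarrow> 'h set" and n :: nat
    and sV :: "'k \<Rightarrow> 'v::ab_group_add \<Rightarrow> 'v" and act :: "'h \<Rightarrow> 'v \<Rightarrow> 'v"
    and delta :: "'v \<Rightarrow> ('h \<times> 'v \<Rightarrow>\<^sub>0 'k)"
  assumes H: "hopf_algebra sH mult one Delta eps S"
    and S_bij: "bij S"
    and filt: "hopf_filtration sH mult Delta eps S Hf"
    and Hn: "\<forall>i\<ge>n. Hf i = {0}"
    and YD: "yd_module sH mult one Delta eps S sV act delta"
  shows "(\<forall>i::nat. \<forall>v \<in> yd_filt sV act Hf (int i).
            tmem2 sH sV (delta v)
              {ft a w | a w k. a \<in> Hf k \<and> w \<in> yd_filt sV act Hf (int i - int k)})
       \<and> braided_vs_filtration sV (yd_braiding act delta) (\<lambda>i. yd_filt sV act Hf (int i))"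
proof -
  interpret filtered_yd_module sH mult one Delta eps S Hf sV act delta
    using H filt YD by unfold_locales
  show ?thesis
    using delta_mem braided_vs_filtration_F Hn unfolding HF_tensors_def by blast
qed

end
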